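(* Let $N$ be a network with $n$ boundary vertices and excedance $k$, let $r\ge1$ and $\lambda$ with $0\le\lambda_i\le r$, $\sum\lambda_i=kr$. Let $\mathcal S=(S_1,\dots,S_n)$ be a list of boundary label subsets and let $\mathcal I=(I_1,\dots,I_r)$ be the dual list, $I_i=\{j\in[n]: i\in S_j\}$ (so $|I_i|=k$ and the multiset union of the $I_i$ is $\{1^{\lambda_1},\dots,n^{\lambda_n}\}$). Then $$\Delta_{I_1}(N)\Delta_{I_2}(N)\cdots\Delta_{I_r}(N)=\mathrm{sign}(\mathcal S)\,\mathrm{Web}_r(N;\lambda)(E_{\mathcal S}).$$
   Context: Networks. A planar bipartite graph in the disk is a graph $G$ embedded in a closed disk, vertices colored black or white, every edge joining opposite colors; $n$ boundary vertices labeled $1,\dots,n$ counterclockwise, all black, the $i$-th incident to at most one edge $b_i$; others interior. A network $N$ is such a $G$ with edge weights $\mathrm{wt}(e)\in\mathbb C^\times$. An almost perfect matching $\pi$ uses every interior vertex exactly once and each boundary vertex at most once; $\partial(\pi)$ is the set of boundary vertices used; $\mathrm{wt}(\pi)=\prod_{e\in\pi}\mathrm{wt}(e)$; excedance $k=|\partial(\pi)|$ = #interior white − #interior black vertices; $N$ is assumed to have an almost perfect matching. $\Delta_I(N)=\sum_{\partial(\pi)=I}\mathrm{wt}(\pi)$. Tensors. $U=\mathbb C^r$, basis $E_1,\dots,E_r$, $E_1\wedge\cdots\wedge E_r=1$. $\mathcal W_\lambda(U)=\mathrm{Hom}_{SL(U)}(\bigotimes_i\bigwedge^{\lambda_i}U,\mathbb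 C)$. $E_S$ = wedge of $E_i$, $i\in S$, increasingly. Boundary label subsets: $\mathcal S=(S_1,\dots,S_n)$, $|S_j|=\lambda_j$, multiset union $\{1^k,\dots,r^k\}$; $E_{\mathcal S}=E_{S_1}\otimes\cdots\otimes E_{S_n}$; $\mathrm{sign}(\mathcal S)=(-1)^{\mathrm{inv}}$, $\mathrm{inv}$ = inversions of the word listing $S_1$ increasingly, then $S_2$, etc. Weblike subgraphs: multiplicities $m(e)\in\{0,\dots,r\}$ on edges of $G$ summing to $r$ at each interior vertex; degree $\lambda(W)=(m(b_1),\dots,m(b_n))$; $\mathrm{wt}(W)=\prod_e\mathrm{wt}(e)^{m(e)}$. Consistent labeling: sets $S(e)\subset[r]$, $|S(e)|=m(e)$, pairwise disjoint at each interior vertex; $a(\mathcal S;W)$ = number with $S(b_j)=S_j$. $\mathbf W\in\mathcal W_\lambda(U)$ is the unique invariant with $\mathbf W(E_{\mathcal S})=\mathrm{sign}(\mathcal S)a(\mathcal S;W)$ for all $\mathcal S$. $\mathrm{Web}_r(N;\lambda)=\sum_{\lambda(W)=\lambda}\mathrm{wt}(W)\mathbf W$. *)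

theory Defs
  imports Complex_Main
begin

text \<open>Edges are abstract (parallel edges
allowed); each edge e joins its black endpoint bend e to its white endpoint wend e.  The embedding in the disk is not
modelled.\<close>

record ('v, 'e) bgraph =
  verts  :: "'v set"
  blacks :: "'v set"
  whites :: "'v set"
  edges  :: "'e set"
  bend   :: "'e \<Rightarrow> 'v"
  wend   :: "'e \<Rightarrow> 'v"
  bdry   :: "nat \<Rightarrow> 'v"
  nbd    :: nat

definition incident :: "('v, 'e) bgraph \<Rightarrow> 'e \<Rightarrow> 'v \<Rightarrow> bool" where
  "incident G e v \<longleftrightarrow> bend G e = v \<or> wend G e = v"

definition bdry_verts :: "('v, 'e) bgraph \<Rightarrow> 'v set" where
  "bdry_verts G = bdry G ` {1..nbd G}"

definition interior :: "('v, 'e) bgraph \<Rightarrow> 'v set" where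
  "interior G = verts G - bdry_verts G"

definition inc_edges :: "('v, 'e) bgraph \<Rightarrow> 'v \<Rightarrow> 'e set" where
  "inc_edges G v = {e \<in> edges G. incident G e v}"

definition almost_pm :: "('v, 'e) bgraph \<Rightarrow> 'e set \<Rightarrow> bool" where
  "almost_pm G \<pi> \<longleftrightarrow> \<pi> \<subseteq> edges G
     \<and> (\<forall>v \<in> interior G. card {e \<in> \<pi>. incident G e v} = 1)
     \<and> (\<forall>j \<in> {1..nbd G}. card {e \<in> \<pi>. incident G e (bdry G j)} \<le> 1)"

definition pm_boundary :: "('v, 'e) bgraph \<Rightarrow> 'e set \<Rightarrow> nat set" where
  "pm_boundary G \<pi> = {j \<in> {1..nbd G}. \<exists>e \<in> \<pi>. incident G e (bdry G j)}"

definition network :: "('v, 'e) bgraph \<Rightarrow> ('e \<Rightarrow> complex) \<Rightarrow> bool" where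
  "network G wt \<longleftrightarrow>
     finite (verts G) \<and> finite (edges G)
     \<and> blacks G \<union> whites G = verts G \<and> blacks G \<inter> whites G = {}
     \<and> (\<forall>e \<in> edges G. bend G e \<in> blacks G \<and> wend G e \<in> whites G)
     \<and> bdry_verts G \<subseteq> blacks G \<and> inj_on (bdry G) {1..nbd G}
     \<and> (\<forall>j \<in> {1..nbd G}. card (inc_edges G (bdry G j)) \<le> 1)
     \<and> (\<forall>e \<in> edges G. wt e \<noteq> 0)
     \<and> (\<exists>\<pi>. almost_pm G \<pi>)"

definition excedance :: "('v, 'e) bgraph \<Rightarrow> int" where
  "excedance G = int (card (whites G \<inter> interior G)) - int (card (blacks G \<inter> interior G))"

definition Delta :: "('v, 'e) bgraph \<Rightarrow> ('e \<Rightarrow> complex) \<Rightarrow> nat set \<Rightarrow> complex" where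
  "Delta G wt I = (\<Sum>\<pi> \<in> {\<pi>. almost_pm G \<pi> \<and> pm_boundary G \<pi> = I}. \<Prod>e \<in> \<pi>. wt e)"

text \<open>Weblike subgraphs (multiplicity functions, zero off the edge set).\<close>
definition weblike :: "nat \<Rightarrow> ('v, 'e) bgraph \<Rightarrow> ('e \<Rightarrow> nat) \<Rightarrow> bool" where
  "weblike r G m \<longleftrightarrow> (\<forall>e. e \<notin> edges G \<longrightarrow> m e = 0) \<and> (\<forall>e. m e \<le> r)
     \<and> (\<forall>v \<in> interior G. (\<Sum>e \<in> inc_edges G v. m e) = r)"

text \<open>m(b_j): the multiplicity of the (at most one) edge at boundary vertex j (0 if none).\<close>
definition web_degree :: "('v, 'e) bgraph \<Rightarrow> ('e \<Rightarrow> nat) \<Rightarrow> nat \<Rightarrow> nat" where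
  "web_degree G m j = (\<Sum>e \<in> inc_edges G (bdry G j). m e)"

definition web_wt :: "('v, 'e) bgraph \<Rightarrow> ('e \<Rightarrow> complex) \<Rightarrow> ('e \<Rightarrow> nat) \<Rightarrow> complex" where
  "web_wt G wt m = (\<Prod>e \<in> edges G. wt e ^ m e)"

definition consistent_labeling ::
    "nat \<Rightarrow> ('v, 'e) bgraph \<Rightarrow> ('e \<Rightarrow> nat) \<Rightarrow> ('e \<Rightarrow> nat set) \<Rightarrow> bool" where
  "consistent_labeling r G m L \<longleftrightarrow>
     (\<forall>e. e \<notin> edges G \<longrightarrow> L e = {})
     \<and> (\<forall>e \<in> edges G. L e \<subseteq> {1..r} \<and> card (L e) = m e)
     \<and> (\<forall>v \<in> interior G. \<forall>e \<in> inc_edges G v. \<forall>e' \<in> inc_edges G v.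
           e \<noteq> e' \<longrightarrow> L e \<inter> L e' = {})"

definition a_count :: "nat \<Rightarrow> ('v, 'e) bgraph \<Rightarrow> (nat \<Rightarrow> nat set) \<Rightarrow> ('e \<Rightarrow> nat) \<Rightarrow> nat" where
  "a_count r G S m = card {L. consistent_labeling r G m L
      \<and> (\<forall>j \<in> {1..nbd G}. (\<Union>e \<in> inc_edges G (bdry G j). L e) = S j)}"

definition label_word :: "nat \<Rightarrow> (nat \<Rightarrow> nat set) \<Rightarrow> nat list" where
  "label_word n S = concat (map (\<lambda>j. sorted_list_of_set (S j)) [1..<n+1])"

definition inversions :: "nat list \<Rightarrow> nat" where
  "inversions w = card {(p, q). p < q \<and> q < length w \<and> w ! q < w ! p}"

definition sign_labels :: "nat \<Rightarrow> (nat \<Rightarrow> nat set) \<Rightarrow> complex" where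
  "sign_labels n S = (-1) ^ inversions (label_word n S)"

definition boundary_labels :: "nat \<Rightarrow> nat \<Rightarrow> nat \<Rightarrow> (nat \<Rightarrow> nat) \<Rightarrow> (nat \<Rightarrow> nat set) \<Rightarrow> bool" where
  "boundary_labels n r k lam S \<longleftrightarrow>
     (\<forall>j \<in> {1..n}. S j \<subseteq> {1..r} \<and> card (S j) = lam j)
     \<and> (\<forall>i \<in> {1..r}. card {j \<in> {1..n}. i \<in> S j} = k)"

text \<open>Value of the web invariant bold W on the basis tensor E_S, for boundary label
subsets S: by definition of bold W it equals sign(S) a(S;W).\<close>
definition web_inv_value :: "nat \<Rightarrow> ('v, 'e) bgraph \<Rightarrow> ('e \<Rightarrow> nat) \<Rightarrow> (nat \<Rightarrow> nat set) \<Rightarrow> complex" where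
  "web_inv_value r G m S = sign_labels (nbd G) S * of_nat (a_count r G S m)"

definition Web_eval :: "nat \<Rightarrow> ('v, 'e) bgraph \<Rightarrow> ('e \<Rightarrow> complex) \<Rightarrow> (nat \<Rightarrow> nat)
     \<Rightarrow> (nat \<Rightarrow> nat set) \<Rightarrow> complex" where
  "Web_eval r G wt lam S =
     (\<Sum>m \<in> {m. weblike r G m \<and> (\<forall>j \<in> {1..nbd G}. web_degree G m j = lam j)}.
        web_wt G wt m * web_inv_value r G m S)"

definition dual_list :: "nat \<Rightarrow> (nat \<Rightarrow> nat set) \<Rightarrow> nat \<Rightarrow> nat set" where
  "dual_list n S i = {j \<in> {1..n}. i \<in> S j}"

end

theory Submission
  imports Defs "HOL-Library.FuncSet"
begin

text \<open>Expanding the product of the \<open>\<Delta>\<^sub>I\<^sub>i\<close> gives a sum over \<open>r\<close>-tuples of almost perfect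
matchings \<open>(\<pi>\<^sub>1, \<dots>, \<pi>\<^sub>r)\<close> with \<open>\<partial>(\<pi>\<^sub>i) = I\<^sub>i\<close>. Superposing such a tuple, i.e. labelling each
edge \<open>e\<close> by the set of colours \<open>i\<close> with \<open>e \<in> \<pi>\<^sub>i\<close>, gives a consistent labelling of a weblike
subgraph of degree \<open>\<lambda>\<close> with boundary labels \<open>\<S>\<close>, and every such labelling arises from exactly one
tuple: at an interior vertex the \<open>r\<close> labels of the incident edges are disjoint, so they
partition \<open>[r]\<close>, and colour class \<open>i\<close> is a matching. The weight of the tuple is the weight of
the web, so the sum regroups as \<open>\<Sum>\<^sub>W wt(W) a(\<S>;W)\<close>, which is \<open>sign(\<S>) Web\<^sub>r(N;\<lambda>)(E\<^sub>\<S>)\<close>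
because \<open>sign(\<S>)\<^sup>2 = 1\<close>.\<close>

definition boundary_matchings :: "('v, 'e) bgraph \<Rightarrow> nat set \<Rightarrow> 'e set set" where
  "boundary_matchings G I = {\<pi>. almost_pm G \<pi> \<and> pm_boundary G \<pi> = I}"

definition webs_of_degree :: "nat \<Rightarrow> ('v, 'e) bgraph \<Rightarrow> (nat \<Rightarrow> nat) \<Rightarrow> ('e \<Rightarrow> nat) set" where
  "webs_of_degree r G lam = {m. weblike r G m \<and> (\<forall>j \<in> {1..nbd G}. web_degree G m j = lam j)}"

definition boundary_labelings ::
    "nat \<Rightarrow> ('v, 'e) bgraph \<Rightarrow> (nat \<Rightarrow> nat set) \<Rightarrow> ('e \<Rightarrow> nat) \<Rightarrow> ('e \<Rightarrow> nat set) set" where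
  "boundary_labelings r G S m = {L. consistent_labeling r G m L
      \<and> (\<forall>j \<in> {1..nbd G}. (\<Union>e \<in> inc_edges G (bdry G j). L e) = S j)}"

definition superposition :: "nat \<Rightarrow> (nat \<Rightarrow> 'e set) \<Rightarrow> 'e \<Rightarrow> nat set" where
  "superposition r p e = {i \<in> {1..r}. e \<in> p i}"

definition colour_class :: "('v, 'e) bgraph \<Rightarrow> ('e \<Rightarrow> nat set) \<Rightarrow> nat \<Rightarrow> 'e set" where
  "colour_class G L i = {e \<in> edges G. i \<in> L e}"

definition matching_tuples ::
    "nat \<Rightarrow> ('v, 'e) bgraph \<Rightarrow> (nat \<Rightarrow> nat set) \<Rightarrow> (nat \<Rightarrow> 'e set) set" where
  "matching_tuples r G S = PiE {1..r} (\<lambda>i. boundary_matchings G (dual_list (nbd G) S i))"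

lemma Delta_eq_sum_boundary_matchings:
  "Delta G wt I = (\<Sum>\<pi> \<in> boundary_matchings G I. \<Prod>e \<in> \<pi>. wt e)"
  by (simp add: Delta_def boundary_matchings_def)

lemma a_count_eq_card_boundary_labelings: "a_count r G S m = card (boundary_labelings r G S m)"
  by (simp add: a_count_def boundary_labelings_def)

lemma inc_edges_subset_edges: "inc_edges G v \<subseteq> edges G"
  by (auto simp: inc_edges_def)

lemma almost_pm_subset_edges: "almost_pm G \<pi> \<Longrightarrow> \<pi> \<subseteq> edges G"
  by (simp add: almost_pm_def)

lemma superposition_restrict: "superposition r (restrict p {1..r}) = superposition r p"
  by (rule ext) (auto simp: superposition_def)

lemma matching_tuples_subset_edges:
  "p \<in> matching_tuples r G S \<Longrightarrow> i \<in> {1..r} \<Longrightarrow> p i \<subseteq> edges G"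
  by (auto simp: matching_tuples_def boundary_matchings_def almost_pm_def)

lemma colour_class_superposition:
  "i \<in> {1..r} \<Longrightarrow> p i \<subseteq> edges G \<Longrightarrow> colour_class G (superposition r p) i = p i"
  by (auto simp: colour_class_def superposition_def)

lemma superposition_colour_class:
  assumes "consistent_labeling r G m L"
  shows "superposition r (colour_class G L) = L"
  using assms by (fastforce simp: consistent_labeling_def superposition_def colour_class_def)

lemma boundary_labeling_multiplicity:
  assumes "m \<in> webs_of_degree r G lam" and "L \<in> boundary_labelings r G S m"
  shows "(\<lambda>e. card (L e)) = m"
  using assms
  by (force simp: webs_of_degree_def boundary_labelings_def weblike_def consistent_labeling_def)

lemma pm_boundary_colour_class:
  "pm_boundary G (colour_class G L i)
     = {j \<in> {1..nbd G}. i \<in> (\<Union>e \<in> inc_edges G (bdry G j). L e)}"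
  by (auto simp: pm_boundary_def colour_class_def inc_edges_def)

lemma boundary_union_superposition:
  assumes "\<forall>i \<in> {1..r}. p i \<subseteq> edges G" and "j \<in> {1..nbd G}"
  shows "(\<Union>e \<in> inc_edges G (bdry G j). superposition r p e)
           = {i \<in> {1..r}. j \<in> pm_boundary G (p i)}"
  using assms
  by (auto simp: superposition_def pm_boundary_def inc_edges_def) (meson atLeastAtMost_iff subsetD)

lemma prod_superposition_weight:
  assumes "finite (edges G)" and "\<forall>i \<in> {1..r}. p i \<subseteq> edges G"
  shows "(\<Prod>i \<in> {1..r}. \<Prod>e \<in> p i. wt e) = web_wt G wt (\<lambda>e. card (superposition r p e))"
proof -
  have "(\<Prod>i \<in> {1..r}. \<Prod>e \<in> p i. wt e)
      = (\<Prod>i \<in> {1..r}. \<Prod>e \<in> edges G. if e \<in> p i then wt e else 1)"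
  proof (rule prod.cong[OF refl])
    fix i assume "i \<in> {1..r}"
    then have "{e \<in> edges G. e \<in> p i} = p i" using assms(2) by blast
    then show "(\<Prod>e \<in> p i. wt e) = (\<Prod>e \<in> edges G. if e \<in> p i then wt e else 1)"
      using prod.inter_filter[OF assms(1)] by metis
  qed
  also have "\<dots> = (\<Prod>e \<in> edges G. \<Prod>i \<in> {1..r}. if e \<in> p i then wt e else 1)"
    by (rule prod.swap)
  also have "\<dots> = web_wt G wt (\<lambda>e. card (superposition r p e))"
    by (simp add: web_wt_def superposition_def prod.inter_filter[symmetric])
  finally show ?thesis .
qed

lemma inj_on_superposition: "inj_on (superposition r) (matching_tuples r G S)"
proof (rule inj_onI)
  fix p q assume p: "p \<in> matching_tuples r G S" and q: "q \<in> matching_tuples r G S"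
    and eq: "superposition r p = superposition r q"
  show "p = q"
  proof (rule PiE_ext)
    fix i assume "i \<in> {1..r}"
    then show "p i = q i"
      using colour_class_superposition matching_tuples_subset_edges p q eq by metis
  qed (use p q in \<open>simp_all add: matching_tuples_def\<close>)
qed

lemma finite_boundary_matchings: "finite (edges G) \<Longrightarrow> finite (boundary_matchings G I)"
  by (rule finite_subset[of _ "Pow (edges G)"]) (auto simp: boundary_matchings_def almost_pm_def)

lemma finite_webs_of_degree:
  assumes "finite (edges G)"
  shows "finite (webs_of_degree r G lam)"
proof (rule finite_subset)
  show "webs_of_degree r G lam \<subseteq> (\<lambda>f e. if e \<in> edges G then f e else 0) ` PiE (edges G) (\<lambda>_. {..r})"
  proof
    fix m assume "m \<in> webs_of_degree r G lam"
    then have "weblike r G m" by (simp add: webs_of_degree_def)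
    then have "m = (\<lambda>e. if e \<in> edges G then restrict m (edges G) e else 0)"
      and "restrict m (edges G) \<in> PiE (edges G) (\<lambda>_. {..r})"
      by (auto simp: weblike_def)
    then show "m \<in> (\<lambda>f e. if e \<in> edges G then f e else 0) ` PiE (edges G) (\<lambda>_. {..r})"
      by blast
  qed
qed (simp add: assms finite_PiE)

lemma superposition_consistent_labeling:
  assumes "\<forall>i \<in> {1..r}. almost_pm G (p i)"
  shows "consistent_labeling r G (\<lambda>e. card (superposition r p e)) (superposition r p)"
  unfolding consistent_labeling_def
proof (intro conjI allI ballI impI)
  fix e assume "e \<notin> edges G"
  then show "superposition r p e = {}"
    using assms almost_pm_subset_edges by (fastforce simp: superposition_def)
next
  fix v e e' assume v: "v \<in> interior G" and "e \<in> inc_edges G v" "e' \<in> inc_edges G v" "e \<noteq> e'"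
  show "superposition r p e \<inter> superposition r p e' = {}"
  proof (rule ccontr)
    assume "superposition r p e \<inter> superposition r p e' \<noteq> {}"
    then obtain i where i: "i \<in> {1..r}" "e \<in> p i" "e' \<in> p i" by (auto simp: superposition_def)
    have "card {x \<in> p i. incident G x v} = 1"
      using assms i(1) v by (simp add: almost_pm_def)
    moreover have "{e, e'} \<subseteq> {x \<in> p i. incident G x v}"
      using i \<open>e \<in> inc_edges G v\<close> \<open>e' \<in> inc_edges G v\<close> by (auto simp: inc_edges_def)
    ultimately show False
      using \<open>e \<noteq> e'\<close> by (metis card_1_singletonE insert_subset singletonD)
  qed
qed (auto simp: superposition_def)

context
  fixes G :: "('v, 'e) bgraph"
  assumes finite_edges: "finite (edges G)"
    and boundary_degree: "\<forall>j \<in> {1..nbd G}. card (inc_edges G (bdry G j)) \<le> 1"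
begin

lemma finite_inc_edges: "finite (inc_edges G v)"
  using finite_edges inc_edges_subset_edges by (rule finite_subset[rotated])

lemma web_degree_card_UN:
  assumes "j \<in> {1..nbd G}"
  shows "web_degree G (\<lambda>e. card (L e)) j = card (\<Union>e \<in> inc_edges G (bdry G j). L e)"
proof -
  have "card (inc_edges G (bdry G j)) \<le> 1" using boundary_degree assms by blast
  then consider "inc_edges G (bdry G j) = {}" | e where "inc_edges G (bdry G j) = {e}"
    using finite_inc_edges by (metis One_nat_def card_0_eq card_1_singletonE le_Suc_eq le_zero_eq)
  then show ?thesis by cases (simp_all add: web_degree_def)
qed

lemma superposition_weblike:
  assumes "\<forall>i \<in> {1..r}. almost_pm G (p i)"
  shows "weblike r G (\<lambda>e. card (superposition r p e))"
  unfolding weblike_def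
proof (intro conjI allI ballI impI)
  fix v assume v: "v \<in> interior G"
  have "(\<Sum>e \<in> inc_edges G v. card (superposition r p e))
      = (\<Sum>e \<in> inc_edges G v. \<Sum>i \<in> {1..r}. if e \<in> p i then 1 else 0)"
    by (simp add: superposition_def sum.inter_filter[symmetric])
  also have "\<dots> = (\<Sum>i \<in> {1..r}. card {e \<in> inc_edges G v. e \<in> p i})"
    by (subst sum.swap) (simp add: sum.inter_filter[symmetric] finite_inc_edges)
  also have "\<dots> = (\<Sum>i \<in> {1..r}. 1)"
  proof (rule sum.cong[OF refl])
    fix i assume "i \<in> {1..r}"
    then have "{e \<in> inc_edges G v. e \<in> p i} = {e \<in> p i. incident G e v}"
      and "card {e \<in> p i. incident G e v} = 1"
      using assms v almost_pm_subset_edges by (auto simp: inc_edges_def almost_pm_def)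
    then show "card {e \<in> inc_edges G v. e \<in> p i} = 1" by simp
  qed
  finally show "(\<Sum>e \<in> inc_edges G v. card (superposition r p e)) = r" by simp
next
  fix e
  have "card (superposition r p e) \<le> card {1..r}"
    by (rule card_mono) (auto simp: superposition_def)
  then show "card (superposition r p e) \<le> r" by simp
qed (use superposition_consistent_labeling[OF assms] in \<open>simp add: consistent_labeling_def\<close>)

lemma labels_partition_interior:
  assumes "weblike r G m" and "consistent_labeling r G m L" and v: "v \<in> interior G"
  shows "(\<Union>e \<in> inc_edges G v. L e) = {1..r}"
proof (rule card_subset_eq)
  have labels: "L e \<subseteq> {1..r} \<and> card (L e) = m e" if "e \<in> inc_edges G v" for e
    using assms(2) inc_edges_subset_edges[of G v] that by (auto simp: consistent_labeling_def)
  then show "(\<Union>e \<in> inc_edges G v. L e) \<subseteq> {1..r}" by blast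
  have "card (\<Union>e \<in> inc_edges G v. L e) = (\<Sum>e \<in> inc_edges G v. card (L e))"
  proof (rule card_UN_disjoint[OF finite_inc_edges])
    show "\<forall>e \<in> inc_edges G v. finite (L e)"
      using labels by (meson finite_atLeastAtMost finite_subset)
    show "\<forall>e \<in> inc_edges G v. \<forall>e' \<in> inc_edges G v. e \<noteq> e' \<longrightarrow> L e \<inter> L e' = {}"
      using assms(2) v by (simp add: consistent_labeling_def)
  qed
  also have "\<dots> = (\<Sum>e \<in> inc_edges G v. m e)"
    using labels by simp
  also have "\<dots> = card {1..r}"
    using assms(1) v by (simp add: weblike_def)
  finally show "card (\<Union>e \<in> inc_edges G v. L e) = card {1..r}" .
qed simp

lemma colour_class_almost_pm:
  assumes "weblike r G m" and L: "consistent_labeling r G m L" and i: "i \<in> {1..r}"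
  shows "almost_pm G (colour_class G L i)"
  unfolding almost_pm_def
proof (intro conjI ballI)
  fix v assume v: "v \<in> interior G"
  obtain e where e: "e \<in> inc_edges G v" "i \<in> L e"
    using labels_partition_interior[OF assms(1,2) v] i by blast
  have disjoint: "L x \<inter> L e = {}" if "x \<in> inc_edges G v" "x \<noteq> e" for x
    using L v e(1) that by (simp add: consistent_labeling_def)
  have "{x \<in> colour_class G L i. incident G x v} = {e}"
    using e disjoint by (auto simp: colour_class_def inc_edges_def)
  then show "card {x \<in> colour_class G L i. incident G x v} = 1" by simp
next
  fix j assume "j \<in> {1..nbd G}"
  then have "card (inc_edges G (bdry G j)) \<le> 1" using boundary_degree by blast
  moreover have "{x \<in> colour_class G L i. incident G x (bdry G j)} \<subseteq> inc_edges G (bdry G j)"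
    by (auto simp: colour_class_def inc_edges_def)
  ultimately show "card {x \<in> colour_class G L i. incident G x (bdry G j)} \<le> 1"
    using card_mono[OF finite_inc_edges] le_trans by blast
qed (auto simp: colour_class_def)

lemma superposition_matching_tuples:
  assumes S: "\<forall>j \<in> {1..nbd G}. S j \<subseteq> {1..r} \<and> card (S j) = lam j"
  shows "superposition r ` matching_tuples r G S
           = (\<Union>m \<in> webs_of_degree r G lam. boundary_labelings r G S m)"
proof (intro equalityI subsetI)
  fix L assume "L \<in> superposition r ` matching_tuples r G S"
  then obtain p where p: "p \<in> matching_tuples r G S" and L: "L = superposition r p" by blast
  have pm: "\<forall>i \<in> {1..r}. almost_pm G (p i)"
    using p by (auto simp: matching_tuples_def boundary_matchings_def)
  have labels: "(\<Union>e \<in> inc_edges G (bdry G j). L e) = S j" if j: "j \<in> {1..nbd G}" for j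
  proof -
    have "\<forall>i \<in> {1..r}. pm_boundary G (p i) = dual_list (nbd G) S i"
      using p by (auto simp: matching_tuples_def boundary_matchings_def)
    then have "{i \<in> {1..r}. j \<in> pm_boundary G (p i)} = {i \<in> {1..r}. i \<in> S j}"
      using j by (auto simp: dual_list_def)
    also have "\<dots> = S j" using S j by blast
    finally show ?thesis
      using boundary_union_superposition[OF _ j] matching_tuples_subset_edges[OF p] L by simp
  qed
  have "web_degree G (\<lambda>e. card (L e)) j = lam j" if "j \<in> {1..nbd G}" for j
    using web_degree_card_UN[OF that, of L] labels[OF that] S that by simp
  then have "(\<lambda>e. card (L e)) \<in> webs_of_degree r G lam"
    using superposition_weblike[OF pm] L by (simp add: webs_of_degree_def)
  moreover have "L \<in> boundary_labelings r G S (\<lambda>e. card (L e))"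
    using superposition_consistent_labeling[OF pm] labels L
    by (simp add: boundary_labelings_def)
  ultimately show "L \<in> (\<Union>m \<in> webs_of_degree r G lam. boundary_labelings r G S m)" by blast
next
  fix L assume "L \<in> (\<Union>m \<in> webs_of_degree r G lam. boundary_labelings r G S m)"
  then obtain m where web: "weblike r G m" and L: "consistent_labeling r G m L"
    and labels: "\<forall>j \<in> {1..nbd G}. (\<Union>e \<in> inc_edges G (bdry G j). L e) = S j"
    by (auto simp: webs_of_degree_def boundary_labelings_def)
  have "pm_boundary G (colour_class G L i) = dual_list (nbd G) S i" for i
    unfolding pm_boundary_colour_class dual_list_def
    using labels by (intro Collect_cong conj_cong refl) simp
  then have "colour_class G L i \<in> boundary_matchings G (dual_list (nbd G) S i)"
    if "i \<in> {1..r}" for i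
    using colour_class_almost_pm[OF web L that] by (simp add: boundary_matchings_def)
  then have "restrict (colour_class G L) {1..r} \<in> matching_tuples r G S"
    by (simp add: matching_tuples_def)
  moreover have "superposition r (restrict (colour_class G L) {1..r}) = L"
    unfolding superposition_restrict by (rule superposition_colour_class[OF L])
  ultimately show "L \<in> superposition r ` matching_tuples r G S" by (metis image_eqI)
qed

lemma prod_Delta_eq_sum_webs:
  assumes S: "\<forall>j \<in> {1..nbd G}. S j \<subseteq> {1..r} \<and> card (S j) = lam j"
  shows "(\<Prod>i = 1..r. Delta G wt (dual_list (nbd G) S i))
           = (\<Sum>m \<in> webs_of_degree r G lam. web_wt G wt m * of_nat (a_count r G S m))"
proof -
  let ?T = "matching_tuples r G S" and ?W = "webs_of_degree r G lam"
    and ?B = "boundary_labelings r G S" and ?wt = "\<lambda>L. web_wt G wt (\<lambda>e. card (L e))"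
  have "(\<Prod>i = 1..r. Delta G wt (dual_list (nbd G) S i))
      = (\<Sum>p \<in> ?T. \<Prod>i \<in> {1..r}. \<Prod>e \<in> p i. wt e)"
    by (simp add: Delta_eq_sum_boundary_matchings matching_tuples_def prod_sum_PiE
        finite_boundary_matchings finite_edges)
  also have "\<dots> = (\<Sum>p \<in> ?T. ?wt (superposition r p))"
    using matching_tuples_subset_edges
    by (intro sum.cong refl prod_superposition_weight finite_edges) blast
  also have "\<dots> = (\<Sum>L \<in> superposition r ` ?T. ?wt L)"
    by (simp add: sum.reindex inj_on_superposition)
  also have "\<dots> = (\<Sum>m \<in> ?W. \<Sum>L \<in> ?B m. ?wt L)"
    unfolding superposition_matching_tuples[OF S]
  proof (rule sum.UNION_disjoint)
    have "finite (superposition r ` ?T)"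
      by (simp add: matching_tuples_def finite_PiE finite_boundary_matchings finite_edges)
    then show "\<forall>m \<in> ?W. finite (?B m)"
      unfolding superposition_matching_tuples[OF S] by (blast intro: finite_subset)
    show "\<forall>m \<in> ?W. \<forall>m' \<in> ?W. m \<noteq> m' \<longrightarrow> ?B m \<inter> ?B m' = {}"
      using boundary_labeling_multiplicity by blast
  qed (simp add: finite_webs_of_degree finite_edges)
  also have "\<dots> = (\<Sum>m \<in> ?W. web_wt G wt m * of_nat (a_count r G S m))"
  proof (rule sum.cong[OF refl])
    fix m assume "m \<in> ?W"
    then have "?wt L = web_wt G wt m" if "L \<in> ?B m" for L
      using boundary_labeling_multiplicity that by metis
    then show "(\<Sum>L \<in> ?B m. ?wt L) = web_wt G wt m * of_nat (a_count r G S m)"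
      by (simp add: a_count_eq_card_boundary_labelings mult.commute)
  qed
  finally show ?thesis .
qed

end

lemma sign_labels_square: "sign_labels n S * sign_labels n S = 1"
  by (simp add: sign_labels_def power_mult_distrib[symmetric])

theorem mainTheorem3:
  fixes G :: "('v, 'e) bgraph" and wt :: "'e \<Rightarrow> complex"
    and r k :: nat and lam :: "nat \<Rightarrow> nat" and S :: "nat \<Rightarrow> nat set"
  assumes "network G wt"
    and "excedance G = int k"
    and "r \<ge> 1"
    and "\<forall>j \<in> {1..nbd G}. lam j \<le> r"
    and "(\<Sum>j = 1..nbd G. lam j) = k * r"
    and "boundary_labels (nbd G) r k lam S"
  shows "(\<Prod>i = 1..r. Delta G wt (dual_list (nbd G) S i))
           = sign_labels (nbd G) S * Web_eval r G wt lam S"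
proof -
  let ?web_sum = "\<Sum>m \<in> webs_of_degree r G lam. web_wt G wt m * of_nat (a_count r G S m)"
  have "finite (edges G)" and "\<forall>j \<in> {1..nbd G}. card (inc_edges G (bdry G j)) \<le> 1"
    using assms(1) by (simp_all add: network_def)
  moreover have "\<forall>j \<in> {1..nbd G}. S j \<subseteq> {1..r} \<and> card (S j) = lam j"
    using assms(6) by (simp add: boundary_labels_def)
  ultimately have "(\<Prod>i = 1..r. Delta G wt (dual_list (nbd G) S i)) = ?web_sum"
    by (rule prod_Delta_eq_sum_webs)
  also have "\<dots> = sign_labels (nbd G) S * (sign_labels (nbd G) S * ?web_sum)"
    by (simp add: sign_labels_square mult.assoc[symmetric])
  also have "sign_labels (nbd G) S * ?web_sum = Web_eval r G wt lam S"
    unfolding Web_eval_def web_inv_value_def webs_of_degree_def sum_distrib_left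
    by (rule sum.cong[OF refl]) (rule mult.left_commute)
  finally show ?thesis .
qed

end
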